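(* Let $n\in\mathbb N$ and let $X\subseteq[0,1]$ be an arbitrary subset. Then the set $$Y_n(X):=\{\mathbf y\in S:\ \operatorname{rint}I_j(\mathbf y)\not\subseteq X\ \text{for } j=0,1,\dots,n\}$$ is open and pathwise connected. In particular, the regularity set $Y$ associated with any $n$-field function $J$ and any singular kernel functions $K_1,\dots,K_n$ is open and pathwise connected.
   Context: $S=\{\mathbf y\in\mathbb R^n:0<y_1<\dots<y_n<1\}$. Set $y_0:=0$ and $y_{n+1}:=1$, and let $I_j(\mathbf y)=[y_j,y_{j+1}]$ for $j=0,\dots,n$. $\operatorname{rint}$ denotes the interior relative to $[0,1]$; thus $\operatorname{rint}I_0(\mathbf y)=[0,y_1)$, $\operatorname{rint}I_n(\mathbf y)=(y_n,1]$, and $\operatorname{rint}I_j(\mathbf y)=(y_j,y_{j+1})$ for $0<j<n$. For singular kernel functions $K_1,\dots,K_n$ (concave on $(-1,0)$ and on $(0,1)$, with $\lim_{t\to0}K_i(t)=-\infty$) and an $n$-field function $J:[0,1]\to[-\infty,\infty)$, the regularity set is $Y=\{\mathbf y\in S:\sup_{t\in I_j(\mathbf y)}\bigl(J(t)+\sum_iK_i(t-y_i)\bigr)\neq-\infty\ \forall j\}$. This set equals $Y_n(X)$ with $X=\{t\in[0,1]:J(t)=-\infty\}$. An $n$-field function is bounded above, and its set of finite values has total weight greater than $n$, where $0$ and $1$ have weight $1/2$ and interior points have weight $1$. *)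

theory Defs
  imports "HOL-Analysis.Analysis"
begin

text \<open>Points of R^n are modelled as functions nat => real vanishing outside {1..n};
  the topology is the product topology on nat => real restricted to this subspace
  (which is homeomorphic to Euclidean R^n).\<close>

definition Rn :: "nat \<Rightarrow> (nat \<Rightarrow> real) set" where
  "Rn n = {y. \<forall>k. k \<notin> {1..n} \<longrightarrow> y k = 0}"

definition yext :: "nat \<Rightarrow> (nat \<Rightarrow> real) \<Rightarrow> nat \<Rightarrow> real" where
  "yext n y j = (if j = 0 then 0 else if j = n + 1 then 1 else y j)"

definition simplexS :: "nat \<Rightarrow> (nat \<Rightarrow> real) set" where
  "simplexS n = {y \<in> Rn n. \<forall>j\<le>n. yext n y j < yext n y (j + 1)}"

definition Ij :: "nat \<Rightarrow> (nat \<Rightarrow> real) \<Rightarrow> nat \<Rightarrow> real set" where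
  "Ij n y j = {yext n y j .. yext n y (j + 1)}"

definition rintIj :: "nat \<Rightarrow> (nat \<Rightarrow> real) \<Rightarrow> nat \<Rightarrow> real set" where
  "rintIj n y j = (top_of_set {0..1}) interior_of (Ij n y j)"

definition Yn :: "nat \<Rightarrow> real set \<Rightarrow> (nat \<Rightarrow> real) set" where
  "Yn n X = {y \<in> simplexS n. \<forall>j\<le>n. \<not> (rintIj n y j \<subseteq> X)}"

definition singular_kernel :: "(real \<Rightarrow> ereal) \<Rightarrow> bool" where
  "singular_kernel K \<longleftrightarrow>
     (\<forall>t\<in>{-1<..<0} \<union> {0<..<1}. \<bar>K t\<bar> \<noteq> \<infinity>) \<and>
     concave_on {-1<..<0} (\<lambda>t. real_of_ereal (K t)) \<and>
     concave_on {0<..<1} (\<lambda>t. real_of_ereal (K t)) \<and>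
     K 0 = -\<infinity> \<and> (K \<longlongrightarrow> -\<infinity>) (at 0)"

definition pt_weight :: "real \<Rightarrow> ereal" where
  "pt_weight t = (if t = 0 \<or> t = 1 then 1/2 else 1)"

definition set_weight :: "real set \<Rightarrow> ereal" where
  "set_weight A = (if finite A then (\<Sum>t\<in>A. pt_weight t) else \<infinity>)"

definition nfield :: "nat \<Rightarrow> (real \<Rightarrow> ereal) \<Rightarrow> bool" where
  "nfield n J \<longleftrightarrow>
     (\<forall>t\<in>{0..1}. J t \<noteq> \<infinity>) \<and>
     (\<exists>M::real. \<forall>t\<in>{0..1}. J t \<le> ereal M) \<and>
     set_weight {t\<in>{0..1}. J t \<noteq> -\<infinity>} > ereal (real n)"

definition regY :: "nat \<Rightarrow> (real \<Rightarrow> ereal) \<Rightarrow> (nat \<Rightarrow> real \<Rightarrow> ereal) \<Rightarrow> (nat \<Rightarrow> real) set" where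
  "regY n J K = {y \<in> simplexS n. \<forall>j\<le>n.
      (SUP t\<in>Ij n y j. J t + (\<Sum>i=1..n. K i (t - y i))) \<noteq> -\<infinity>}"

end

theory Submission
  imports Defs
begin

text \<open>A point \<open>y\<close> lies in \<open>Y\<^sub>n(X)\<close> iff one can pick \<open>z\<^sub>j \<in> rint I\<^sub>j(y) - X\<close> for every \<open>j\<close>. Such
  witnesses form an increasing chain \<open>z\<^sub>0 < \<dots> < z\<^sub>n\<close> in \<open>[0,1] - X\<close>, and conversely every such
  chain puts the whole open box \<open>z\<^sub>j\<^sub>-\<^sub>1 < y\<^sub>j < z\<^sub>j\<close> into \<open>Y\<^sub>n(X)\<close>. Hence \<open>Y\<^sub>n(X)\<close> is a union of
  open convex boxes. For two chains \<open>w \<le> z\<close>, replacing the entries of \<open>z\<close> by those of \<open>w\<close> one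
  at a time yields chains whose consecutive boxes overlap, and any two chains lie above their
  pointwise minimum; so \<open>Y\<^sub>n(X)\<close> is path connected. The regularity set is \<open>Y\<^sub>n(X)\<close> for
  \<open>X = J\<^sup>-\<^sup>1(-\<infinity>)\<close>: the kernel sum is \<open>-\<infinity>\<close> exactly at the nodes \<open>y\<^sub>i\<close>, and the nodes lying in
  \<open>I\<^sub>j(y)\<close> are exactly the points that \<open>rint\<close> removes from it.\<close>

lemma yext_strict_mono:
  assumes "y \<in> simplexS n" "i < k" "k \<le> n + 1"
  shows "yext n y i < yext n y k"
  using assms(2,3)
proof (induction k)
  case (Suc k)
  have "yext n y k < yext n y (Suc k)"
    using assms(1) Suc.prems by (simp add: simplexS_def)
  with Suc show ?case
    by (cases "i = k") auto
qed simp

lemma yext_mono: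
  assumes "y \<in> simplexS n" "i \<le> k" "k \<le> n + 1"
  shows "yext n y i \<le> yext n y k"
  using yext_strict_mono[OF assms(1), of i k] assms(2,3) by (cases "i = k") auto

lemma yext_in_unit_interval:
  assumes "y \<in> simplexS n" "j \<le> n + 1"
  shows "yext n y j \<in> {0..1}"
  using yext_mono[OF assms(1), of 0 j] yext_mono[OF assms(1), of j "n + 1"] assms(2)
  by (simp add: yext_def)

lemma simplexS_coord_in_open_unit_interval:
  assumes "y \<in> simplexS n" "i \<in> {1..n}"
  shows "y i \<in> {0<..<1}"
  using yext_strict_mono[OF assms(1), of 0 i] yext_strict_mono[OF assms(1), of i "n + 1"] assms(2)
  by (simp add: yext_def)

lemma Ij_subset_unit_interval:
  assumes "y \<in> simplexS n" "j \<le> n"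
  shows "Ij n y j \<subseteq> {0..1}"
  using yext_in_unit_interval[OF assms(1), of j] yext_in_unit_interval[OF assms(1), of "j + 1"] assms(2)
  by (auto simp: Ij_def)

lemma interior_of_interval_in_unit_interval:
  fixes a b :: real
  assumes "0 \<le> a" "b \<le> 1"
  shows "top_of_set {0..1} interior_of {a..b} = {t \<in> {0..1}. (a = 0 \<or> a < t) \<and> (b = 1 \<or> t < b)}"
    (is "_ = ?R")
proof
  have R_eq: "?R = {0..1} \<inter> ((if a = 0 then UNIV else {a<..}) \<inter> (if b = 1 then UNIV else {..<b}))"
    by auto
  have "openin (top_of_set {0..1}) ?R"
    unfolding R_eq by (intro openin_open_Int open_Int) auto
  moreover have "?R \<subseteq> {a..b}"
    using assms by auto
  ultimately show "?R \<subseteq> top_of_set {0..1} interior_of {a..b}"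
    by (simp add: interior_of_maximal)
next
  show "top_of_set {0..1} interior_of {a..b} \<subseteq> ?R"
  proof
    fix t assume "t \<in> top_of_set {0..1} interior_of {a..b}"
    then obtain T where T: "openin (top_of_set {0..1}) T" "t \<in> T" "T \<subseteq> {a..b}"
      by (auto simp: interior_of_def)
    then obtain e where "e > 0" and e: "\<And>s. s \<in> {0..1} \<Longrightarrow> dist s t < e \<Longrightarrow> s \<in> {a..b}"
      unfolding openin_euclidean_subtopology_iff by blast
    have t: "t \<in> {0..1}" "t \<in> {a..b}"
      using T openin_imp_subset by fastforce+
    have "a < t" if "a \<noteq> 0"
    proof (rule ccontr)
      assume "\<not> a < t"
      then have "t = a" using t by simp
      define s where "s = a - min (e/2) a"
      have "s \<in> {0..1}" "dist s t < e"
        using \<open>e > 0\<close> \<open>t = a\<close> t by (auto simp: s_def dist_real_def)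
      then have "a \<le> s" using e by simp
      then show False
        using \<open>e > 0\<close> assms that by (simp add: s_def)
    qed
    moreover have "t < b" if "b \<noteq> 1"
    proof (rule ccontr)
      assume "\<not> t < b"
      then have "t = b" using t by simp
      define s where "s = b + min (e/2) (1 - b)"
      have "s \<in> {0..1}" "dist s t < e"
        using \<open>e > 0\<close> \<open>t = b\<close> t by (auto simp: s_def dist_real_def)
      then have "s \<le> b" using e by simp
      then show False
        using \<open>e > 0\<close> assms that by (simp add: s_def)
    qed
    ultimately show "t \<in> ?R"
      using t by auto
  qed
qed
lemma rintIj_eq:
  assumes y: "y \<in> simplexS n" and j: "j \<le> n"
  shows "rintIj n y j = {t \<in> {0..1}. (j = 0 \<or> yext n y j < t) \<and> (j = n \<or> t < yext n y (j + 1))}"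
proof -
  have "yext n y j = 0 \<longleftrightarrow> j = 0"
    using yext_strict_mono[OF y, of 0 j] j by (auto simp: yext_def)
  moreover have "yext n y (j + 1) = 1 \<longleftrightarrow> j = n"
    using yext_strict_mono[OF y, of "j + 1" "n + 1"] j by (auto simp: yext_def)
  ultimately show ?thesis
    using yext_in_unit_interval[OF y, of j] yext_in_unit_interval[OF y, of "j + 1"] j
    by (simp add: rintIj_def Ij_def interior_of_interval_in_unit_interval)
qed

lemma rintIj_eq_Ij_minus_nodes:
  assumes y: "y \<in> simplexS n" and j: "j \<le> n"
  shows "rintIj n y j = Ij n y j - y ` {1..n}"
proof (intro set_eqI iffI)
  fix t assume "t \<in> rintIj n y j"
  then have t: "t \<in> {0..1}" "j = 0 \<or> yext n y j < t" "j = n \<or> t < yext n y (j + 1)"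
    unfolding rintIj_eq[OF y j] by auto
  have "t \<noteq> y i" if i: "i \<in> {1..n}" for i
  proof (cases "i \<le> j")
    case True
    then have "y i \<le> yext n y j"
      using yext_mono[OF y True] i j by (simp add: yext_def)
    then show ?thesis
      using t(2) True i by auto
  next
    case False
    then have "yext n y (j + 1) \<le> y i"
      using yext_mono[OF y, of "j + 1" i] i by (simp add: yext_def)
    then show ?thesis
      using t(3) False i by auto
  qed
  moreover have "t \<in> Ij n y j"
    using t by (auto simp: Ij_def yext_def)
  ultimately show "t \<in> Ij n y j - y ` {1..n}"
    by blast
next
  fix t assume t: "t \<in> Ij n y j - y ` {1..n}"
  have "yext n y j < t" if "j \<noteq> 0"
    using t that j by (force simp: Ij_def yext_def)
  moreover have "t < yext n y (j + 1)" if "j \<noteq> n"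
    using t that j by (force simp: Ij_def yext_def)
  ultimately show "t \<in> rintIj n y j"
    using t Ij_subset_unit_interval[OF y j] unfolding rintIj_eq[OF y j] by auto
qed

definition avoiding_chain :: "nat \<Rightarrow> real set \<Rightarrow> (nat \<Rightarrow> real) \<Rightarrow> bool" where
  "avoiding_chain n X z \<longleftrightarrow> (\<forall>j\<le>n. z j \<in> {0..1} - X) \<and> (\<forall>j<n. z j < z (Suc j))"

definition chain_cell :: "nat \<Rightarrow> (nat \<Rightarrow> real) \<Rightarrow> (nat \<Rightarrow> real) set" where
  "chain_cell n z = {y \<in> Rn n. \<forall>j\<in>{1..n}. z (j - 1) < y j \<and> y j < z j}"

lemma chain_cell_subset_Yn:
  assumes z: "avoiding_chain n X z"
  shows "chain_cell n z \<subseteq> Yn n X"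
proof
  fix y assume y: "y \<in> chain_cell n z"
  have z01: "z j \<in> {0..1} - X" if "j \<le> n" for j
    using z that by (simp add: avoiding_chain_def)
  have below: "j = 0 \<or> yext n y j < z j" if "j \<le> n" for j
    using y that by (auto simp: chain_cell_def yext_def)
  have above: "j = n \<or> z j < yext n y (j + 1)" if "j \<le> n" for j
  proof (cases "j = n")
    case False
    then have "Suc j \<in> {1..n}"
      using that by simp
    then have "z j < y (Suc j)"
      using y unfolding chain_cell_def by fastforce
    then show ?thesis
      using False by (simp add: yext_def)
  qed simp
  have "yext n y j < yext n y (j + 1)" if "j \<le> n" for j
    using below[OF that] above[OF that] z01[OF that] by (auto simp: yext_def)
  then have S: "y \<in> simplexS n"
    using y by (simp add: simplexS_def chain_cell_def)
  have "z j \<in> rintIj n y j - X" if "j \<le> n" for j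
    using below[OF that] above[OF that] z01[OF that] unfolding rintIj_eq[OF S that] by simp
  with S show "y \<in> Yn n X"
    unfolding Yn_def by blast
qed

lemma Yn_subset_chain_cells:
  assumes y: "y \<in> Yn n X"
  obtains z where "avoiding_chain n X z" "y \<in> chain_cell n z"
proof -
  have S: "y \<in> simplexS n"
    using y by (simp add: Yn_def)
  have "\<forall>j. \<exists>t. j \<le> n \<longrightarrow> t \<in> rintIj n y j - X"
    using y by (auto simp: Yn_def)
  then obtain z where z: "\<And>j. j \<le> n \<Longrightarrow> z j \<in> rintIj n y j - X"
    by metis
  have zj: "z j \<in> {0..1}" "j = 0 \<or> yext n y j < z j" "j = n \<or> z j < yext n y (j + 1)"
    if "j \<le> n" for j
    using z[OF that] unfolding rintIj_eq[OF S that] by auto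
  have "z j < z (Suc j)" if "j < n" for j
    using zj(3)[of j] zj(2)[of "Suc j"] that by auto
  then have "avoiding_chain n X z"
    using z zj(1) by (simp add: avoiding_chain_def)
  moreover have "z (j - 1) < y j \<and> y j < z j" if j: "j \<in> {1..n}" for j
  proof -
    obtain i where i: "j = Suc i" "i < n"
      using j by (cases j) auto
    show ?thesis
      using zj(3)[of i] zj(2)[of j] i by (simp add: yext_def)
  qed
  then have "y \<in> chain_cell n z"
    using S by (simp add: chain_cell_def simplexS_def)
  ultimately show thesis
    using that by blast
qed

lemma Yn_eq_Union_chain_cells: "Yn n X = (\<Union>z \<in> Collect (avoiding_chain n X). chain_cell n z)"
proof (intro subset_antisym subsetI)
  fix y assume "y \<in> Yn n X"
  then obtain z where "avoiding_chain n X z" "y \<in> chain_cell n z"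
    by (rule Yn_subset_chain_cells)
  then show "y \<in> (\<Union>z \<in> Collect (avoiding_chain n X). chain_cell n z)"
    by blast
next
  fix y assume "y \<in> (\<Union>z \<in> Collect (avoiding_chain n X). chain_cell n z)"
  then show "y \<in> Yn n X"
    using chain_cell_subset_Yn by blast
qed

lemma openin_chain_cell: "openin (top_of_set (Rn n)) (chain_cell n z)"
proof -
  have "open ((\<lambda>y. y j) -` {z (j - 1)<..<z j})" for j
    by (rule open_vimage) auto
  then have "open (\<Inter>j\<in>{1..n}. (\<lambda>y. y j) -` {z (j - 1)<..<z j})"
    by (intro open_INT) auto
  moreover have "chain_cell n z = Rn n \<inter> (\<Inter>j\<in>{1..n}. (\<lambda>y. y j) -` {z (j - 1)<..<z j})"
    by (auto simp: chain_cell_def)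
  ultimately show ?thesis
    by (simp add: openin_open_Int)
qed

lemma openin_Yn: "openin (top_of_set (Rn n)) (Yn n X)"
  unfolding Yn_eq_Union_chain_cells by (intro openin_Union) (auto simp: openin_chain_cell)

lemma path_connected_chain_cell: "path_connected (chain_cell n z)"
  unfolding path_connected_def
proof (intro ballI)
  fix a b assume a: "a \<in> chain_cell n z" and b: "b \<in> chain_cell n z"
  define g where "g t j = (1 - t) * a j + t * b j" for t :: real and j
  have "path g"
    unfolding path_def g_def by (intro continuous_on_coordinatewise_then_product continuous_intros)
  moreover have "path_image g \<subseteq> chain_cell n z"
    unfolding path_image_def
  proof (intro image_subsetI)
    fix t :: real assume "t \<in> {0..1}"
    have "g t j \<in> {z (j - 1)<..<z j}" if "j \<in> {1..n}" for j
    proof -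
      have "(1 - t) *\<^sub>R a j + t *\<^sub>R b j \<in> {z (j - 1)<..<z j}"
        using a b \<open>t \<in> {0..1}\<close> that
        by (intro convexD[OF convex_real_interval(8)]) (auto simp: chain_cell_def)
      then show ?thesis
        by (simp add: g_def)
    qed
    moreover have "g t \<in> Rn n"
      using a b by (auto simp: g_def chain_cell_def Rn_def)
    ultimately show "g t \<in> chain_cell n z"
      by (simp add: chain_cell_def)
  qed
  moreover have "pathstart g = a" "pathfinish g = b"
    by (simp_all add: pathstart_def pathfinish_def g_def fun_eq_iff)
  ultimately show "\<exists>g. path g \<and> path_image g \<subseteq> chain_cell n z \<and> pathstart g = a \<and> pathfinish g = b"
    by blast
qed

lemma chain_cells_intersect:
  assumes "\<forall>j\<in>{1..n}. max (a (j - 1)) (b (j - 1)) < min (a j) (b j)"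
  shows "chain_cell n a \<inter> chain_cell n b \<noteq> {}"
proof -
  define p where
    "p j = (if j \<in> {1..n} then (max (a (j - 1)) (b (j - 1)) + min (a j) (b j)) / 2 else 0)" for j
  have "p \<in> chain_cell n a \<inter> chain_cell n b"
    using assms by (auto simp: p_def chain_cell_def Rn_def)
  then show ?thesis
    by blast
qed

lemma chain_cell_nonempty:
  assumes "\<forall>j<n. z j < z (Suc j)"
  shows "chain_cell n z \<noteq> {}"
proof -
  have "z (j - 1) < z j" if j: "j \<in> {1..n}" for j
  proof -
    obtain i where "j = Suc i" "i < n"
      using j by (cases j) auto
    then show ?thesis
      using assms by simp
  qed
  then show ?thesis
    using chain_cells_intersect[of n z z] by auto
qed

lemma path_component_Yn_same_cell:
  assumes "avoiding_chain n X z" "x \<in> chain_cell n z" "y \<in> chain_cell n z"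
  shows "path_component (Yn n X) x y"
  using path_connected_chain_cell[of n z] assms(2,3) chain_cell_subset_Yn[OF assms(1)]
  by (meson path_component_of_subset path_connected_component)

text \<open>Consecutive chains \<open>u k\<close> and \<open>u (Suc k)\<close> below differ only in the \<open>k\<close>-th entry,
  so their cells overlap.\<close>

lemma path_component_Yn_comparable_chains:
  assumes z: "avoiding_chain n X z" and w: "avoiding_chain n X w" and le: "\<forall>j\<le>n. w j \<le> z j"
    and x: "x \<in> chain_cell n z" and y: "y \<in> chain_cell n w"
  shows "path_component (Yn n X) x y"
proof -
  define u where "u k j = (if j < k then w j else z j)" for k j
  have u: "avoiding_chain n X (u k)" for k
    using z w le by (auto simp: avoiding_chain_def u_def intro: less_le_trans)
  have overlap: "chain_cell n (u k) \<inter> chain_cell n (u (Suc k)) \<noteq> {}" for k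
  proof (rule chain_cells_intersect, intro ballI)
    fix j assume j: "j \<in> {1..n}"
    then obtain i where i: "j = Suc i" "i < n"
      by (cases j) auto
    then have "z i < z j" "w i < w j" "w j \<le> z j" "w i \<le> z i"
      using z w le by (auto simp: avoiding_chain_def)
    then show "max (u k (j - 1)) (u (Suc k) (j - 1)) < min (u k j) (u (Suc k) j)"
      using i by (auto simp: u_def)
  qed
  have "\<forall>y\<in>chain_cell n (u k). path_component (Yn n X) x y" for k
  proof (induction k)
    case 0
    have "u 0 = z"
      by (simp add: u_def fun_eq_iff)
    then show ?case
      using path_component_Yn_same_cell[OF z x] by simp
  next
    case (Suc k)
    obtain p where p: "p \<in> chain_cell n (u k)" "p \<in> chain_cell n (u (Suc k))"
      using overlap[of k] by blast
    show ?case
      using Suc.IH p path_component_Yn_same_cell[OF u p(2)] path_component_trans by blast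
  qed
  moreover have "chain_cell n (u (Suc n)) = chain_cell n w"
    by (auto simp: chain_cell_def u_def)
  ultimately show ?thesis
    using y by blast
qed

lemma path_connected_Yn: "path_connected (Yn n X)"
  unfolding path_connected_component
proof (intro ballI)
  fix x y assume "x \<in> Yn n X" "y \<in> Yn n X"
  then obtain a b where a: "avoiding_chain n X a" "x \<in> chain_cell n a"
    and b: "avoiding_chain n X b" "y \<in> chain_cell n b"
    by (metis Yn_subset_chain_cells)
  define m where "m j = min (a j) (b j)" for j
  have m: "avoiding_chain n X m"
    using a(1) b(1) by (auto simp: avoiding_chain_def m_def min_def)
  then obtain p where p: "p \<in> chain_cell n m"
    using chain_cell_nonempty[of n m] unfolding avoiding_chain_def by blast
  have "path_component (Yn n X) x p" "path_component (Yn n X) y p"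
    using path_component_Yn_comparable_chains[OF a(1) m _ a(2) p]
      path_component_Yn_comparable_chains[OF b(1) m _ b(2) p] by (auto simp: m_def)
  then show "path_component (Yn n X) x y"
    by (meson path_component_sym path_component_trans)
qed

lemma sum_ereal_eq_MInfty:
  fixes f :: "'a \<Rightarrow> ereal"
  assumes "finite A" "i \<in> A" "f i = -\<infinity>" "\<And>x. x \<in> A \<Longrightarrow> f x \<noteq> \<infinity>"
  shows "sum f A = -\<infinity>"
  using assms by (induction A rule: finite_induct) (auto simp: sum_Pinfty)

lemma singular_kernel_values:
  assumes "singular_kernel K" "s \<in> {-1<..<1}"
  shows "K s \<noteq> \<infinity>" and "K s = -\<infinity> \<longleftrightarrow> s = 0"
proof -
  have "\<bar>K s\<bar> \<noteq> \<infinity>" if "s \<noteq> 0"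
  proof -
    have "s \<in> {-1<..<0} \<union> {0<..<1}"
      using assms(2) that by auto
    then show ?thesis
      using assms(1) unfolding singular_kernel_def by auto
  qed
  moreover have "K 0 = -\<infinity>"
    using assms(1) by (simp add: singular_kernel_def)
  ultimately show "K s \<noteq> \<infinity>" and "K s = -\<infinity> \<longleftrightarrow> s = 0"
    by (cases "s = 0"; auto)+
qed

lemma kernel_sum_values:
  fixes n :: nat and y :: "nat \<Rightarrow> real"
  assumes K: "\<forall>i\<in>{1..n}. singular_kernel (K i)" and y: "\<forall>i\<in>{1..n}. y i \<in> {0<..<1}"
    and t: "t \<in> {0..1}"
  shows "(\<Sum>i=1..n. K i (t - y i)) \<noteq> \<infinity>"
    and "(\<Sum>i=1..n. K i (t - y i)) = -\<infinity> \<longleftrightarrow> t \<in> y ` {1..n}"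
proof -
  have "t - y i \<in> {-1<..<1}" if "i \<in> {1..n}" for i
    using y[rule_format, OF that] t by auto
  then have Ki: "K i (t - y i) \<noteq> \<infinity>" "K i (t - y i) = -\<infinity> \<longleftrightarrow> t = y i" if "i \<in> {1..n}" for i
    using singular_kernel_values[of "K i" "t - y i"] K that by auto
  then show "(\<Sum>i=1..n. K i (t - y i)) \<noteq> \<infinity>"
    by (simp add: sum_Pinfty)
  show "(\<Sum>i=1..n. K i (t - y i)) = -\<infinity> \<longleftrightarrow> t \<in> y ` {1..n}"
  proof
    assume "(\<Sum>i=1..n. K i (t - y i)) = -\<infinity>"
    then obtain i where "i \<in> {1..n}" "\<bar>K i (t - y i)\<bar> = \<infinity>"
      using sum_Inf[of "\<lambda>i. K i (t - y i)" "{1..n}"] by auto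
    then show "t \<in> y ` {1..n}"
      using Ki by auto
  next
    assume "t \<in> y ` {1..n}"
    then obtain i where i: "i \<in> {1..n}" "t = y i"
      by blast
    then have "K i (t - y i) = -\<infinity>"
      using Ki(2) by blast
    then show "(\<Sum>i=1..n. K i (t - y i)) = -\<infinity>"
      using Ki(1) i by (intro sum_ereal_eq_MInfty[where i = i]) auto
  qed
qed

lemma SUP_Ij_neq_MInfty_iff:
  assumes J: "nfield n J" and K: "\<forall>i\<in>{1..n}. singular_kernel (K i)"
    and y: "y \<in> simplexS n" and j: "j \<le> n"
  shows "(SUP t\<in>Ij n y j. J t + (\<Sum>i=1..n. K i (t - y i))) \<noteq> -\<infinity> \<longleftrightarrow>
    \<not> rintIj n y j \<subseteq> {t \<in> {0..1}. J t = -\<infinity>}"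
proof -
  have Ij: "Ij n y j \<subseteq> {0..1}"
    using Ij_subset_unit_interval[OF y j] .
  have "J t + (\<Sum>i=1..n. K i (t - y i)) = -\<infinity> \<longleftrightarrow> J t = -\<infinity> \<or> t \<in> y ` {1..n}"
    if "t \<in> Ij n y j" for t
    using kernel_sum_values[OF K _, of y t] simplexS_coord_in_open_unit_interval[OF y] J Ij that
    by (auto simp: nfield_def)
  moreover have "(SUP t\<in>Ij n y j. J t + (\<Sum>i=1..n. K i (t - y i))) = -\<infinity> \<longleftrightarrow>
      (\<forall>t \<in> Ij n y j. J t + (\<Sum>i=1..n. K i (t - y i)) = -\<infinity>)"
    using SUP_bot_conv(1)[of "\<lambda>t. J t + (\<Sum>i=1..n. K i (t - y i))" "Ij n y j"]
    by (simp add: bot_ereal_def)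
  ultimately have "(SUP t\<in>Ij n y j. J t + (\<Sum>i=1..n. K i (t - y i))) \<noteq> -\<infinity> \<longleftrightarrow>
      (\<exists>t \<in> Ij n y j - y ` {1..n}. J t \<noteq> -\<infinity>)"
    by auto
  also have "\<dots> \<longleftrightarrow> \<not> rintIj n y j \<subseteq> {t \<in> {0..1}. J t = -\<infinity>}"
    using Ij by (auto simp: rintIj_eq_Ij_minus_nodes[OF y j])
  finally show ?thesis .
qed

lemma regY_eq_Yn:
  assumes "nfield n J" "\<forall>i\<in>{1..n}. singular_kernel (K i)"
  shows "regY n J K = Yn n {t \<in> {0..1}. J t = -\<infinity>}"
  using SUP_Ij_neq_MInfty_iff[OF assms] by (auto simp: regY_def Yn_def)

theorem proposition4p1:
  fixes n :: nat and X :: "real set"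
  assumes "X \<subseteq> {0..1}"
  shows "openin (top_of_set (Rn n)) (Yn n X) \<and> path_connected (Yn n X) \<and>
    (\<forall>(J :: real \<Rightarrow> ereal) (K :: nat \<Rightarrow> real \<Rightarrow> ereal).
       nfield n J \<and> (\<forall>i\<in>{1..n}. singular_kernel (K i)) \<longrightarrow>
       openin (top_of_set (Rn n)) (regY n J K) \<and> path_connected (regY n J K))"
  using openin_Yn path_connected_Yn regY_eq_Yn by simp

end
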